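(* Let $H$ be a digraph and $\delta>0$. Then \[ G(H,\delta)\le F(H,\delta)\le2G(H,\delta). \]
   Context: A digraph has no self-loops and at most one directed edge per ordered pair; degree = in-degree + out-degree; $\Delta$ is the maximum degree of $H$. $H^*$ is the induced subgraph on vertices of degree $\Delta$; $\mathcal S_H$ is the collection of independent sets of $H^*$ (including $\emptyset$). For $S\in\mathcal S_H$: $T=\mathsf N(S)$ is the set of vertices outside $S$ adjacent in either direction to $S$; $\mathsf N^+(S)$ (resp. $\mathsf N^-(S)$) is the set of $v\notin S$ with an edge $(u,v)$ (resp. $(v,u)$) for some $u\in S$; $A_S=|\mathsf N^+(S)|$, $B_S=|\mathsf N^-(S)|$; $\mathsf E(S,T)$, $\mathsf E(T,S)$ are the sets of edges from $S$ to $T$ and from $T$ to $S$; $F_S$ is the bipartite digraph on $S\cup T$ with edges $\mathsf E(S,T)\cup\mathsf E(T,S)$. A maximum fractional matching of $F_S$ is $w:\mathsf E(F_S)\to[0,1]$ with $\sum_{e\ni v}w(e)\le1$ for all vertices and equality for $v\in S$; $a_S=\max_w\sum_{e\in\mathsf E(S,T)}w(e)$, $b_S=\max_w\sum_{e\in\mathsf E(T,S)}w(e)$. $\mathsf v^+(S),\mathsf v^-(S),\mathsf v^{\pm}(S)$ count vertices of $S$ with no in-neighbours, no out-neighbours, and both. Define \[ f_H=\sum_{S\in\mathcal S_H}x_1^{\mathsf v^+(S)}x_2^{\mathsf v^-(S)}(x_1\wedge x_2)^{\mathsf v^{\pm}(S)}y_1^{A_S}y_2^{B_S},\quad g_H=\sum_{S\in\mathcal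 S_H}x_1^{\mathsf v^+(S)}x_2^{\mathsf v^-(S)}(x_1\wedge x_2)^{\mathsf v^{\pm}(S)}y_1^{a_S}y_2^{b_S}, \] as functions of $(x_1,x_2,y_1,y_2)$, and $F(H,\delta)=\inf\{x_1y_1+x_2y_2: f_H=1+\delta\}$, $G(H,\delta)=\inf\{x_1y_1+x_2y_2: g_H=1+\delta\}$, both infima over $x_1,x_2\ge0$, $0\le y_1,y_2\le1$. *)

theory Defs
  imports Complex_Main "HOL-Library.Extended_Real"
begin

text \<open>A digraph H is given by a finite vertex set V and an edge set E \<subseteq> V \<times> V
  without self-loops (a set of ordered pairs, so at most one edge per ordered pair).\<close>

definition outdeg :: "('a \<times> 'a) set \<Rightarrow> 'a \<Rightarrow> nat" where
  "outdeg E v = card {u. (v, u) \<in> E}"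

definition indeg :: "('a \<times> 'a) set \<Rightarrow> 'a \<Rightarrow> nat" where
  "indeg E v = card {u. (u, v) \<in> E}"

definition deg :: "('a \<times> 'a) set \<Rightarrow> 'a \<Rightarrow> nat" where
  "deg E v = indeg E v + outdeg E v"

definition maxdeg :: "'a set \<Rightarrow> ('a \<times> 'a) set \<Rightarrow> nat" where
  "maxdeg V E = Max (deg E ` V)"

definition maxdeg_verts :: "'a set \<Rightarrow> ('a \<times> 'a) set \<Rightarrow> 'a set" where
  "maxdeg_verts V E = {v \<in> V. deg E v = maxdeg V E}"

definition indep_sets :: "'a set \<Rightarrow> ('a \<times> 'a) set \<Rightarrow> 'a set set" where
  "indep_sets V E = {S. S \<subseteq> maxdeg_verts V E \<and> (\<forall>u\<in>S. \<forall>v\<in>S. (u, v) \<notin> E)}"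

definition out_nbhd :: "('a \<times> 'a) set \<Rightarrow> 'a set \<Rightarrow> 'a set" where
  "out_nbhd E S = {v. v \<notin> S \<and> (\<exists>u\<in>S. (u, v) \<in> E)}"

definition in_nbhd :: "('a \<times> 'a) set \<Rightarrow> 'a set \<Rightarrow> 'a set" where
  "in_nbhd E S = {v. v \<notin> S \<and> (\<exists>u\<in>S. (v, u) \<in> E)}"

definition nbhd :: "('a \<times> 'a) set \<Rightarrow> 'a set \<Rightarrow> 'a set" where
  "nbhd E S = out_nbhd E S \<union> in_nbhd E S"

definition edges_between :: "('a \<times> 'a) set \<Rightarrow> 'a set \<Rightarrow> 'a set \<Rightarrow> ('a \<times> 'a) set" where
  "edges_between E X Y = {e \<in> E. fst e \<in> X \<and> snd e \<in> Y}"

definition FS_edges :: "('a \<times> 'a) set \<Rightarrow> 'a set \<Rightarrow> ('a \<times> 'a) set" where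
  "FS_edges E S = edges_between E S (nbhd E S) \<union> edges_between E (nbhd E S) S"

definition max_frac_matching :: "('a \<times> 'a) set \<Rightarrow> 'a set \<Rightarrow> ('a \<times> 'a \<Rightarrow> real) \<Rightarrow> bool" where
  "max_frac_matching E S w \<longleftrightarrow>
     (\<forall>e\<in>FS_edges E S. 0 \<le> w e \<and> w e \<le> 1) \<and>
     (\<forall>v \<in> S \<union> nbhd E S. (\<Sum>e\<in>{e\<in>FS_edges E S. fst e = v \<or> snd e = v}. w e) \<le> 1) \<and>
     (\<forall>v \<in> S. (\<Sum>e\<in>{e\<in>FS_edges E S. fst e = v \<or> snd e = v}. w e) = 1)"

text \<open>a_S and b_S (maximum over the feasible w; convention 0 if no such w exists,
  which can only happen when H has no edges).\<close>
definition a_S :: "('a \<times> 'a) set \<Rightarrow> 'a set \<Rightarrow> real" where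
  "a_S E S = (if \<exists>w. max_frac_matching E S w then
      Sup {(\<Sum>e\<in>edges_between E S (nbhd E S). w e) | w. max_frac_matching E S w} else 0)"

definition b_S :: "('a \<times> 'a) set \<Rightarrow> 'a set \<Rightarrow> real" where
  "b_S E S = (if \<exists>w. max_frac_matching E S w then
      Sup {(\<Sum>e\<in>edges_between E (nbhd E S) S. w e) | w. max_frac_matching E S w} else 0)"

definition v_plus :: "('a \<times> 'a) set \<Rightarrow> 'a set \<Rightarrow> nat" where
  "v_plus E S = card {v\<in>S. indeg E v = 0}"

definition v_minus :: "('a \<times> 'a) set \<Rightarrow> 'a set \<Rightarrow> nat" where
  "v_minus E S = card {v\<in>S. outdeg E v = 0}"

definition v_pm :: "('a \<times> 'a) set \<Rightarrow> 'a set \<Rightarrow> nat" where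
  "v_pm E S = card {v\<in>S. indeg E v \<noteq> 0 \<and> outdeg E v \<noteq> 0}"

text \<open>real power with the convention y^0 = 1 (also for y = 0)\<close>
definition rpow :: "real \<Rightarrow> real \<Rightarrow> real" where
  "rpow y a = (if a = 0 then 1 else y powr a)"

definition f_H :: "'a set \<Rightarrow> ('a \<times> 'a) set \<Rightarrow> real \<Rightarrow> real \<Rightarrow> real \<Rightarrow> real \<Rightarrow> real" where
  "f_H V E x1 x2 y1 y2 = (\<Sum>S\<in>indep_sets V E.
      x1 ^ v_plus E S * x2 ^ v_minus E S * (min x1 x2) ^ v_pm E S
      * y1 ^ card (out_nbhd E S) * y2 ^ card (in_nbhd E S))"

definition g_H :: "'a set \<Rightarrow> ('a \<times> 'a) set \<Rightarrow> real \<Rightarrow> real \<Rightarrow> real \<Rightarrow> real \<Rightarrow> real" where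
  "g_H V E x1 x2 y1 y2 = (\<Sum>S\<in>indep_sets V E.
      x1 ^ v_plus E S * x2 ^ v_minus E S * (min x1 x2) ^ v_pm E S
      * rpow y1 (a_S E S) * rpow y2 (b_S E S))"

text \<open>infima taken in the extended reals (infimum of the empty set is +\<infinity>)\<close>
definition F_H :: "'a set \<Rightarrow> ('a \<times> 'a) set \<Rightarrow> real \<Rightarrow> ereal" where
  "F_H V E \<delta> = Inf {ereal (x1 * y1 + x2 * y2) | x1 x2 y1 y2.
      0 \<le> x1 \<and> 0 \<le> x2 \<and> 0 \<le> y1 \<and> y1 \<le> 1 \<and> 0 \<le> y2 \<and> y2 \<le> 1 \<and>
      f_H V E x1 x2 y1 y2 = 1 + \<delta>}"

definition G_H :: "'a set \<Rightarrow> ('a \<times> 'a) set \<Rightarrow> real \<Rightarrow> ereal" where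
  "G_H V E \<delta> = Inf {ereal (x1 * y1 + x2 * y2) | x1 x2 y1 y2.
      0 \<le> x1 \<and> 0 \<le> x2 \<and> 0 \<le> y1 \<and> y1 \<le> 1 \<and> 0 \<le> y2 \<and> y2 \<le> 1 \<and>
      g_H V E x1 x2 y1 y2 = 1 + \<delta>}"

end

(*
  Comparing monomials: a_S <= A_S and b_S <= B_S, so for y in [0,1] every monomial of f_H
  is at most the matching monomial of g_H. Conversely, for independent S the uniform
  fractional matching with weight 1/Delta on every edge of F_S gives a_S + b_S >= |S| with
  a_S >= v^+(S) and b_S >= v^-(S); distributing the exponents accordingly bounds each
  monomial of g_H at (x, y) by c^|S| with c = x_1 y_1 + x_2 y_2, i.e. by the monomial of
  f_H at (c, c, 1, 1), a point of cost 2c. In both directions the comparison yields a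
  point where the other polynomial is at least 1 + delta; since both polynomials equal 1
  at x = 0, scaling x down continuously reaches the level 1 + delta without increasing
  the cost.
*)

theory Submission
  imports Defs "HOL-Analysis.Extended_Real_Limits"
begin

lemma rpow_nonneg: "0 \<le> y \<Longrightarrow> 0 \<le> rpow y a"
  by (simp add: rpow_def)

lemma rpow_of_nat: "0 \<le> y \<Longrightarrow> rpow y (real n) = y ^ n"
  by (cases "y = 0") (auto simp: rpow_def powr_realpow)

lemma rpow_add:
  assumes "0 \<le> y" "0 \<le> s" "0 \<le> t"
  shows "rpow y (s + t) = rpow y s * rpow y t"
  using assms by (cases "y = 0") (auto simp: rpow_def powr_add)

lemma rpow_antimono:
  assumes "0 \<le> y" "y \<le> 1" "0 \<le> b" "b \<le> a"
  shows "rpow y a \<le> rpow y b"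
  using assms powr_mono'[of b a y] powr_le1[of a y]
  by (cases "y = 0") (auto simp: rpow_def)

lemma power_le_rpow:
  assumes "0 \<le> y" "y \<le> 1" "0 \<le> a" "a \<le> real n"
  shows "y ^ n \<le> rpow y a"
  using rpow_antimono[OF assms] rpow_of_nat[OF assms(1)] by simp

lemma rpow_mono_base:
  assumes "0 \<le> y" "y \<le> z" "0 \<le> s"
  shows "rpow y s \<le> rpow z s"
  using assms powr_mono2[of s y z] by (simp add: rpow_def)

lemma rpow_mult_le_max_power:
  fixes y1 y2 \<alpha> \<beta> :: real and p q r :: nat
  assumes y: "0 \<le> y1" "0 \<le> y2"
    and "p \<le> \<alpha>" "q \<le> \<beta>" "\<alpha> + \<beta> = p + q + r"
  shows "rpow y1 \<alpha> * rpow y2 \<beta> \<le> y1 ^ p * y2 ^ q * max y1 y2 ^ r"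
proof -
  define \<rho> where "\<rho> = \<alpha> - p"
  define M where "M = max y1 y2"
  have \<rho>: "0 \<le> \<rho>" "0 \<le> r - \<rho>" and \<alpha>: "\<alpha> = p + \<rho>" and \<beta>: "\<beta> = q + (r - \<rho>)"
    using assms by (auto simp: \<rho>_def)
  have M: "0 \<le> M" "y1 \<le> M" "y2 \<le> M"
    using y by (auto simp: M_def)
  have "rpow y1 \<alpha> * rpow y2 \<beta> = y1 ^ p * y2 ^ q * (rpow y1 \<rho> * rpow y2 (r - \<rho>))"
    unfolding \<alpha> \<beta> using y \<rho> by (simp add: rpow_add rpow_of_nat)
  also have "\<dots> \<le> y1 ^ p * y2 ^ q * (rpow M \<rho> * rpow M (r - \<rho>))"
    using y \<rho> M
    by (intro mult_left_mono mult_mono rpow_mono_base) (auto simp: rpow_nonneg)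
  also have "rpow M \<rho> * rpow M (r - \<rho>) = M ^ r"
    using M \<rho> by (simp flip: rpow_add add: rpow_of_nat)
  finally show ?thesis
    unfolding M_def .
qed

lemma min_mult_max_le:
  fixes x1 x2 y1 y2 :: real
  assumes "0 \<le> x1" "0 \<le> x2" "0 \<le> y1" "0 \<le> y2"
  shows "min x1 x2 * max y1 y2 \<le> x1 * y1 + x2 * y2"
proof (cases "y1 \<le> y2")
  case True
  then have "min x1 x2 * max y1 y2 \<le> x2 * y2"
    using assms by (simp add: mult_right_mono)
  then show ?thesis
    using assms by (simp add: add_increasing)
next
  case False
  then have "min x1 x2 * max y1 y2 \<le> x1 * y1"
    using assms by (simp add: mult_right_mono)
  then show ?thesis
    using assms by (simp add: add_increasing2)
qed

lemma monomial_le_cost_power: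
  fixes x1 x2 y1 y2 a b \<alpha> \<beta> :: real and p q r :: nat
  assumes x: "0 \<le> x1" "0 \<le> x2" and y: "0 \<le> y1" "y1 \<le> 1" "0 \<le> y2" "y2 \<le> 1"
    and "\<alpha> \<le> a" "\<beta> \<le> b" "p \<le> \<alpha>" "q \<le> \<beta>" "\<alpha> + \<beta> = p + q + r"
  shows "x1 ^ p * x2 ^ q * min x1 x2 ^ r * rpow y1 a * rpow y2 b
    \<le> (x1 * y1 + x2 * y2) ^ (p + q + r)"
proof -
  let ?c = "x1 * y1 + x2 * y2"
  have "rpow y1 a * rpow y2 b \<le> rpow y1 \<alpha> * rpow y2 \<beta>"
    using assms by (intro mult_mono rpow_antimono) (auto simp: rpow_nonneg)
  also have "\<dots> \<le> y1 ^ p * y2 ^ q * max y1 y2 ^ r"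
    using assms by (intro rpow_mult_le_max_power) auto
  finally have "x1 ^ p * x2 ^ q * min x1 x2 ^ r * (rpow y1 a * rpow y2 b)
      \<le> x1 ^ p * x2 ^ q * min x1 x2 ^ r * (y1 ^ p * y2 ^ q * max y1 y2 ^ r)"
    using x by (intro mult_left_mono) auto
  also have "\<dots> = (x1 * y1) ^ p * (x2 * y2) ^ q * (min x1 x2 * max y1 y2) ^ r"
    by (simp add: power_mult_distrib mult_ac)
  also have "\<dots> \<le> ?c ^ p * ?c ^ q * ?c ^ r"
    using x y min_mult_max_le[OF x y(1,3)]
    by (intro mult_mono power_mono) (auto simp: add_increasing add_increasing2)
  finally show ?thesis
    by (simp add: power_add mult_ac)
qed

lemma card_le_sum:
  fixes f :: "'a \<Rightarrow> real"
  assumes "finite S" and "T \<subseteq> S"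
    and "\<And>u. u \<in> S \<Longrightarrow> 0 \<le> f u" and "\<And>u. u \<in> T \<Longrightarrow> f u = 1"
  shows "card T \<le> (\<Sum>u\<in>S. f u)"
proof -
  have "card T = (\<Sum>u\<in>T. f u)"
    using assms(4) by simp
  also have "\<dots> \<le> (\<Sum>u\<in>S. f u)"
    using assms(1-3) by (intro sum_mono2) auto
  finally show ?thesis .
qed

lemma Sup_if_exists_bounds:
  fixes s :: "'w \<Rightarrow> real"
  assumes bounds: "\<And>w. P w \<Longrightarrow> 0 \<le> s w \<and> s w \<le> B" and "0 \<le> B"
  defines "\<sigma> \<equiv> if \<exists>w. P w then Sup {s w |w. P w} else 0"
  shows "0 \<le> \<sigma>" and "\<sigma> \<le> B" and "P w \<Longrightarrow> s w \<le> \<sigma>"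
proof -
  have bdd: "bdd_above {s w |w. P w}"
    by (rule bdd_aboveI[where M = B]) (use bounds in auto)
  show upper: "s w \<le> \<sigma>" if "P w" for w
    using that bdd unfolding \<sigma>_def by (auto intro: cSup_upper)
  show "0 \<le> \<sigma>"
  proof (cases "\<exists>w. P w")
    case True
    then obtain w where "P w"
      by blast
    then show ?thesis
      using bounds upper by (meson order_trans)
  qed (simp add: \<sigma>_def)
  show "\<sigma> \<le> B"
    using bounds \<open>0 \<le> B\<close> unfolding \<sigma>_def by (auto intro!: cSup_least)
qed

lemma Inf_le_scaled_Inf:
  fixes A B :: "ereal set" and k :: real
  assumes "0 < k" and "\<And>b. b \<in> B \<Longrightarrow> \<exists>a\<in>A. a \<le> ereal k * b"
  shows "Inf A \<le> ereal k * Inf B"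
proof -
  have "Inf A \<le> Inf {ereal k * b |b. b \<in> B}"
    using assms(2) by (intro Inf_mono) blast
  also have "\<dots> = ereal k * Inf B"
    using ereal_Inf_cmult[OF assms(1), of "\<lambda>b. b \<in> B"] by simp
  finally show ?thesis .
qed

lemma indep_sets_subset: "S \<in> indep_sets V E \<Longrightarrow> S \<subseteq> V"
  unfolding indep_sets_def maxdeg_verts_def by auto

lemma finite_indep_sets: "finite V \<Longrightarrow> finite (indep_sets V E)"
  by (rule finite_subset[of _ "Pow V"]) (auto dest: indep_sets_subset)

lemma empty_in_indep_sets: "{} \<in> indep_sets V E"
  unfolding indep_sets_def by simp

lemma nbhd_empty: "out_nbhd E {} = {}" "in_nbhd E {} = {}" "nbhd E {} = {}"
  unfolding nbhd_def out_nbhd_def in_nbhd_def by auto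

lemma a_S_empty: "a_S E {} = 0" and b_S_empty: "b_S E {} = 0"
  unfolding a_S_def b_S_def by (simp_all add: edges_between_def nbhd_empty)

lemma vertex_counts_empty: "v_plus E {} = 0" "v_minus E {} = 0" "v_pm E {} = 0"
  unfolding v_plus_def v_minus_def v_pm_def by simp_all

lemma vertex_counts_pos:
  assumes "finite S" "S \<noteq> {}"
  shows "0 < v_plus E S + v_minus E S + v_pm E S"
proof -
  obtain u where u: "u \<in> S"
    using assms(2) by blast
  show ?thesis
  proof (cases "indeg E u = 0 \<or> outdeg E u = 0")
    case True
    then have "0 < v_plus E S \<or> 0 < v_minus E S"
      using assms(1) u unfolding v_plus_def v_minus_def by (auto simp: card_gt_0_iff)
    then show ?thesis by linarith
  next
    case False
    then have "0 < v_pm E S"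
      using assms(1) u unfolding v_pm_def by (auto simp: card_gt_0_iff)
    then show ?thesis by linarith
  qed
qed

lemma vertex_count_powers_at_zero:
  assumes "finite S" "S \<noteq> {}"
  shows "(0::real) ^ v_plus E S * 0 ^ v_minus E S * 0 ^ v_pm E S = 0"
  using vertex_counts_pos[OF assms, of E] by (simp add: zero_power)

lemma sum_indep_sets_at_zero:
  fixes t :: "'a set \<Rightarrow> real"
  assumes "finite V" and "t {} = 1"
  shows "(\<Sum>S\<in>indep_sets V E. 0 ^ v_plus E S * 0 ^ v_minus E S * 0 ^ v_pm E S * t S) = 1"
proof -
  have "(\<Sum>S\<in>indep_sets V E. 0 ^ v_plus E S * 0 ^ v_minus E S * 0 ^ v_pm E S * t S)
      = (\<Sum>S\<in>indep_sets V E. if S = {} then 1 else 0)"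
  proof (rule sum.cong)
    fix S assume "S \<in> indep_sets V E"
    then have "finite S"
      using assms(1) by (meson finite_subset indep_sets_subset)
    then show "0 ^ v_plus E S * 0 ^ v_minus E S * 0 ^ v_pm E S * t S = (if S = {} then 1 else 0)"
      using vertex_count_powers_at_zero[of S E] assms(2) by (auto simp: vertex_counts_empty)
  qed simp
  also have "\<dots> = 1"
    using finite_indep_sets[OF assms(1)] empty_in_indep_sets by simp
  finally show ?thesis .
qed

lemma f_H_at_zero: "finite V \<Longrightarrow> f_H V E 0 0 y1 y2 = 1"
  unfolding f_H_def min.idem mult.assoc[of _ "y1 ^ _"]
  by (rule sum_indep_sets_at_zero) (simp_all add: nbhd_empty)

lemma g_H_at_zero: "finite V \<Longrightarrow> g_H V E 0 0 y1 y2 = 1"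
  unfolding g_H_def min.idem mult.assoc[of _ "rpow y1 _"]
  by (rule sum_indep_sets_at_zero) (simp_all add: a_S_empty b_S_empty rpow_def)

lemma continuous_on_f_H_scaled: "continuous_on A (\<lambda>t. f_H V E (t * x1) (t * x2) y1 y2)"
  unfolding f_H_def by (intro continuous_intros)

lemma continuous_on_g_H_scaled: "continuous_on A (\<lambda>t. g_H V E (t * x1) (t * x2) y1 y2)"
  unfolding g_H_def by (intro continuous_intros)

lemma a_S_without_edges: "a_S {} S = 0" and b_S_without_edges: "b_S {} S = 0"
  unfolding a_S_def b_S_def edges_between_def by simp_all

lemma f_H_eq_g_H_without_edges: "f_H V {} = g_H V {}"
  unfolding f_H_def g_H_def a_S_without_edges b_S_without_edges
  by (simp add: out_nbhd_def in_nbhd_def rpow_def)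

definition feasible_costs :: "(real \<Rightarrow> real \<Rightarrow> real \<Rightarrow> real \<Rightarrow> real) \<Rightarrow> real \<Rightarrow> ereal set" where
  "feasible_costs h c = {ereal (x1 * y1 + x2 * y2) | x1 x2 y1 y2.
      0 \<le> x1 \<and> 0 \<le> x2 \<and> 0 \<le> y1 \<and> y1 \<le> 1 \<and> 0 \<le> y2 \<and> y2 \<le> 1 \<and> h x1 x2 y1 y2 = c}"

lemma F_H_eq_Inf_feasible_costs: "F_H V E \<delta> = Inf (feasible_costs (f_H V E) (1 + \<delta>))"
  unfolding F_H_def feasible_costs_def ..

lemma G_H_eq_Inf_feasible_costs: "G_H V E \<delta> = Inf (feasible_costs (g_H V E) (1 + \<delta>))"
  unfolding G_H_def feasible_costs_def ..

lemma feasible_cost_le_by_scaling: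
  assumes x: "0 \<le> x1" "0 \<le> x2" and y: "0 \<le> y1" "y1 \<le> 1" "0 \<le> y2" "y2 \<le> 1"
    and cont: "continuous_on {0..1} (\<lambda>t. h (t * x1) (t * x2) y1 y2)"
    and "h 0 0 y1 y2 \<le> c" "c \<le> h x1 x2 y1 y2"
  shows "\<exists>a\<in>feasible_costs h c. a \<le> ereal (x1 * y1 + x2 * y2)"
proof -
  obtain t where t: "0 \<le> t" "t \<le> 1" "h (t * x1) (t * x2) y1 y2 = c"
    using IVT'[of "\<lambda>t. h (t * x1) (t * x2) y1 y2" 0 c 1] cont assms by auto
  let ?a = "(t * x1) * y1 + (t * x2) * y2"
  have "ereal ?a \<in> feasible_costs h c"
    unfolding feasible_costs_def using t x y by fastforce
  moreover have "?a = t * (x1 * y1 + x2 * y2)"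
    by (simp add: algebra_simps)
  moreover have "t * (x1 * y1 + x2 * y2) \<le> x1 * y1 + x2 * y2"
    using t x y by (intro mult_left_le_one_le) auto
  ultimately show ?thesis
    by (metis ereal_less_eq(3))
qed

locale loopfree_digraph =
  fixes V :: "'a set" and E :: "('a \<times> 'a) set"
  assumes finite_vertices: "finite V"
    and edges_subset: "E \<subseteq> V \<times> V"
    and no_loops: "(v, v) \<notin> E"
begin

lemma finite_edges: "finite E"
  using finite_subset[OF edges_subset] finite_vertices by blast

lemma nbhd_subset: "out_nbhd E S \<subseteq> V" "in_nbhd E S \<subseteq> V" "nbhd E S \<subseteq> V"
  using edges_subset unfolding nbhd_def out_nbhd_def in_nbhd_def by auto

lemma finite_FS_edges: "finite (FS_edges E S)"
  by (rule finite_subset[OF _ finite_edges]) (auto simp: FS_edges_def edges_between_def)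

lemma finite_successors: "finite {v. (u, v) \<in> E}"
  and finite_predecessors: "finite {u. (u, v) \<in> E}"
  using edges_subset by (auto intro: finite_subset[OF _ finite_vertices])

lemma max_frac_matching_sum_le_card:
  assumes w: "max_frac_matching E S w" and X: "X \<subseteq> FS_edges E S"
    and N: "finite N" "N \<subseteq> S \<union> nbhd E S"
    and \<pi>: "\<And>e. e \<in> X \<Longrightarrow> \<pi> e \<in> N \<and> (fst e = \<pi> e \<or> snd e = \<pi> e)"
  shows "0 \<le> (\<Sum>e\<in>X. w e) \<and> (\<Sum>e\<in>X. w e) \<le> card N"
proof
  have finite_X: "finite X"
    using finite_subset[OF X finite_FS_edges] .
  have nonneg: "0 \<le> w e" if "e \<in> FS_edges E S" for e
    using w that unfolding max_frac_matching_def by auto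
  show "0 \<le> (\<Sum>e\<in>X. w e)"
    using X nonneg by (intro sum_nonneg) blast
  have "\<pi> ` X \<subseteq> N"
    using \<pi> by blast
  then have "(\<Sum>e\<in>X. w e) = (\<Sum>v\<in>N. \<Sum>e\<in>{e\<in>X. \<pi> e = v}. w e)"
    using sum.group[OF finite_X N(1), of \<pi> w] by simp
  also have "\<dots> \<le> (\<Sum>v\<in>N. 1)"
  proof (rule sum_mono)
    fix v assume v: "v \<in> N"
    have "(\<Sum>e\<in>{e\<in>X. \<pi> e = v}. w e) \<le> (\<Sum>e\<in>{e\<in>FS_edges E S. fst e = v \<or> snd e = v}. w e)"
      using X \<pi> nonneg finite_FS_edges by (intro sum_mono2) auto
    also have "\<dots> \<le> 1"
      using w v N(2) unfolding max_frac_matching_def by auto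
    finally show "(\<Sum>e\<in>{e\<in>X. \<pi> e = v}. w e) \<le> 1" .
  qed
  finally show "(\<Sum>e\<in>X. w e) \<le> card N"
    by simp
qed

lemma a_S_bounds:
  shows "0 \<le> a_S E S" and "a_S E S \<le> card (out_nbhd E S)"
    and "max_frac_matching E S w \<Longrightarrow> (\<Sum>e\<in>edges_between E S (nbhd E S). w e) \<le> a_S E S"
proof -
  let ?s = "\<lambda>w. \<Sum>e\<in>edges_between E S (nbhd E S). w e"
  have "0 \<le> ?s w \<and> ?s w \<le> card (out_nbhd E S)" if "max_frac_matching E S w" for w
    using finite_subset[OF nbhd_subset(1) finite_vertices]
    by (intro max_frac_matching_sum_le_card[OF that, where \<pi> = snd])
      (auto simp: FS_edges_def edges_between_def nbhd_def out_nbhd_def in_nbhd_def)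
  note bounds = Sup_if_exists_bounds[of "max_frac_matching E S" ?s, OF this of_nat_0_le_iff]
  show "0 \<le> a_S E S" "a_S E S \<le> card (out_nbhd E S)"
    "max_frac_matching E S w \<Longrightarrow> ?s w \<le> a_S E S"
    using bounds unfolding a_S_def by blast+
qed

lemma b_S_bounds:
  shows "0 \<le> b_S E S" and "b_S E S \<le> card (in_nbhd E S)"
    and "max_frac_matching E S w \<Longrightarrow> (\<Sum>e\<in>edges_between E (nbhd E S) S. w e) \<le> b_S E S"
proof -
  let ?s = "\<lambda>w. \<Sum>e\<in>edges_between E (nbhd E S) S. w e"
  have "0 \<le> ?s w \<and> ?s w \<le> card (in_nbhd E S)" if "max_frac_matching E S w" for w
    using finite_subset[OF nbhd_subset(2) finite_vertices]
    by (intro max_frac_matching_sum_le_card[OF that, where \<pi> = fst])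
      (auto simp: FS_edges_def edges_between_def nbhd_def out_nbhd_def in_nbhd_def)
  note bounds = Sup_if_exists_bounds[of "max_frac_matching E S" ?s, OF this of_nat_0_le_iff]
  show "0 \<le> b_S E S" "b_S E S \<le> card (in_nbhd E S)"
    "max_frac_matching E S w \<Longrightarrow> ?s w \<le> b_S E S"
    using bounds unfolding b_S_def by blast+
qed

lemma f_H_le_g_H:
  assumes "0 \<le> x1" "0 \<le> x2" "0 \<le> y1" "y1 \<le> 1" "0 \<le> y2" "y2 \<le> 1"
  shows "f_H V E x1 x2 y1 y2 \<le> g_H V E x1 x2 y1 y2"
  unfolding f_H_def g_H_def
proof (rule sum_mono)
  fix S
  let ?x = "x1 ^ v_plus E S * x2 ^ v_minus E S * min x1 x2 ^ v_pm E S"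
  have x: "0 \<le> ?x"
    using assms by simp
  have y1: "y1 ^ card (out_nbhd E S) \<le> rpow y1 (a_S E S)"
    by (rule power_le_rpow) (use assms a_S_bounds(1,2) in auto)
  have y2: "y2 ^ card (in_nbhd E S) \<le> rpow y2 (b_S E S)"
    by (rule power_le_rpow) (use assms b_S_bounds(1,2) in auto)
  have "?x * y1 ^ card (out_nbhd E S) \<le> ?x * rpow y1 (a_S E S)"
    by (rule mult_left_mono[OF y1 x])
  then show "?x * y1 ^ card (out_nbhd E S) * y2 ^ card (in_nbhd E S) \<le> ?x * rpow y1 (a_S E S) * rpow y2 (b_S E S)"
    by (rule mult_mono[OF _ y2]) (use x assms in \<open>simp_all add: rpow_nonneg\<close>)
qed

lemma deg_le_maxdeg: "v \<in> V \<Longrightarrow> deg E v \<le> maxdeg V E"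
  unfolding maxdeg_def using finite_vertices by (intro Max_ge) auto

lemma maxdeg_pos:
  assumes "E \<noteq> {}"
  shows "0 < maxdeg V E"
proof -
  obtain u v where uv: "(u, v) \<in> E"
    using assms by auto
  then have "0 < outdeg E u"
    unfolding outdeg_def using finite_successors[of u] by (auto simp: card_gt_0_iff)
  moreover have "u \<in> V"
    using uv edges_subset by auto
  ultimately show ?thesis
    using deg_le_maxdeg[of u] unfolding deg_def by linarith
qed

lemma card_edges_from: "finite S \<Longrightarrow> card {e\<in>E. fst e \<in> S} = (\<Sum>u\<in>S. outdeg E u)"
proof -
  assume "finite S"
  moreover have "{e\<in>E. fst e \<in> S} = Sigma S (\<lambda>u. {v. (u, v) \<in> E})"
    by auto
  ultimately show ?thesis
    using finite_successors by (simp add: outdeg_def)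
qed

lemma card_edges_into: "finite S \<Longrightarrow> card {e\<in>E. snd e \<in> S} = (\<Sum>v\<in>S. indeg E v)"
proof -
  assume "finite S"
  moreover have "{e\<in>E. snd e \<in> S} = prod.swap ` Sigma S (\<lambda>v. {u. (u, v) \<in> E})"
    by force
  ultimately show ?thesis
    using finite_predecessors by (simp add: card_image indeg_def)
qed

lemma card_incident_edges: "card {e\<in>E. fst e = v \<or> snd e = v} = deg E v"
proof -
  have "{e\<in>E. fst e = v \<or> snd e = v} = {e\<in>E. fst e \<in> {v}} \<union> {e\<in>E. snd e \<in> {v}}"
    by auto
  moreover have "{e\<in>E. fst e \<in> {v}} \<inter> {e\<in>E. snd e \<in> {v}} = {}"
    using no_loops by auto
  ultimately show ?thesis
    using card_edges_from[of "{v}"] card_edges_into[of "{v}"] finite_edges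
    by (simp add: card_Un_disjoint deg_def)
qed

lemma indep_set_deg: "S \<in> indep_sets V E \<Longrightarrow> u \<in> S \<Longrightarrow> deg E u = maxdeg V E"
  unfolding indep_sets_def maxdeg_verts_def by auto

lemma indep_edges_from: "S \<in> indep_sets V E \<Longrightarrow> edges_between E S (nbhd E S) = {e\<in>E. fst e \<in> S}"
  unfolding indep_sets_def edges_between_def nbhd_def out_nbhd_def in_nbhd_def by fastforce

lemma indep_edges_into: "S \<in> indep_sets V E \<Longrightarrow> edges_between E (nbhd E S) S = {e\<in>E. snd e \<in> S}"
  unfolding indep_sets_def edges_between_def nbhd_def out_nbhd_def in_nbhd_def by fastforce

lemma indep_incident_FS_edges:
  "S \<in> indep_sets V E \<Longrightarrow> v \<in> S \<Longrightarrow>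
    {e\<in>FS_edges E S. fst e = v \<or> snd e = v} = {e\<in>E. fst e = v \<or> snd e = v}"
  unfolding FS_edges_def using indep_edges_from indep_edges_into by auto

lemma uniform_max_frac_matching:
  assumes "E \<noteq> {}" and S: "S \<in> indep_sets V E"
  shows "max_frac_matching E S (\<lambda>_. 1 / maxdeg V E)"
proof -
  let ?D = "real (maxdeg V E)"
  let ?I = "\<lambda>v. {e\<in>FS_edges E S. fst e = v \<or> snd e = v}"
  have D: "1 \<le> ?D"
    using maxdeg_pos[OF assms(1)] by simp
  have "card (?I v) \<le> ?D" if "v \<in> S \<union> nbhd E S" for v
  proof -
    have "v \<in> V"
      using that indep_sets_subset[OF S] nbhd_subset(3) by blast
    have "card (?I v) \<le> card {e\<in>E. fst e = v \<or> snd e = v}"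
      using finite_edges by (intro card_mono) (auto simp: FS_edges_def edges_between_def)
    also have "\<dots> \<le> maxdeg V E"
      using card_incident_edges deg_le_maxdeg[OF \<open>v \<in> V\<close>] by simp
    finally show ?thesis
      by simp
  qed
  moreover have "card (?I v) = ?D" if "v \<in> S" for v
    using indep_incident_FS_edges[OF S that] card_incident_edges indep_set_deg[OF S that] by simp
  ultimately show ?thesis
    unfolding max_frac_matching_def using D by auto
qed

lemma a_S_ge_outdeg_share:
  assumes "E \<noteq> {}" and S: "S \<in> indep_sets V E"
  shows "(\<Sum>u\<in>S. outdeg E u / maxdeg V E) \<le> a_S E S"
proof -
  have "finite S"
    using indep_sets_subset[OF S] finite_subset finite_vertices by blast
  then have "(\<Sum>u\<in>S. outdeg E u / maxdeg V E) = (\<Sum>e\<in>edges_between E S (nbhd E S). 1 / maxdeg V E)"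
    using card_edges_from indep_edges_from[OF S] by (simp add: sum_divide_distrib[symmetric])
  also have "\<dots> \<le> a_S E S"
    by (rule a_S_bounds(3)[OF uniform_max_frac_matching[OF assms]])
  finally show ?thesis .
qed

lemma b_S_ge_indeg_share:
  assumes "E \<noteq> {}" and S: "S \<in> indep_sets V E"
  shows "(\<Sum>u\<in>S. indeg E u / maxdeg V E) \<le> b_S E S"
proof -
  have "finite S"
    using indep_sets_subset[OF S] finite_subset finite_vertices by blast
  then have "(\<Sum>u\<in>S. indeg E u / maxdeg V E) = (\<Sum>e\<in>edges_between E (nbhd E S) S. 1 / maxdeg V E)"
    using card_edges_into indep_edges_into[OF S] by (simp add: sum_divide_distrib[symmetric])
  also have "\<dots> \<le> b_S E S"
    by (rule b_S_bounds(3)[OF uniform_max_frac_matching[OF assms]])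
  finally show ?thesis .
qed

lemma card_indep_set_split:
  assumes "E \<noteq> {}" and S: "S \<in> indep_sets V E"
  shows "card S = v_plus E S + v_minus E S + v_pm E S"
proof -
  let ?P = "{v\<in>S. indeg E v = 0}" and ?Q = "{v\<in>S. outdeg E v = 0}"
    and ?R = "{v\<in>S. indeg E v \<noteq> 0 \<and> outdeg E v \<noteq> 0}"
  have "finite S"
    using indep_sets_subset[OF S] finite_subset finite_vertices by blast
  have "indeg E u + outdeg E u \<noteq> 0" if "u \<in> S" for u
    using indep_set_deg[OF S that] maxdeg_pos[OF assms(1)] unfolding deg_def by simp
  then have "?P \<inter> ?Q = {}"
    by fastforce
  moreover have "S = (?P \<union> ?Q) \<union> ?R" and "(?P \<union> ?Q) \<inter> ?R = {}"
    by auto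
  ultimately show ?thesis
    using \<open>finite S\<close> unfolding v_plus_def v_minus_def v_pm_def
    by (metis (no_types, lifting) card_Un_disjoint finite_Un finite_subset sup_ge1 sup_ge2)
qed

lemma vertex_counts_le_degree_shares:
  assumes "E \<noteq> {}" and S: "S \<in> indep_sets V E"
  shows "v_plus E S \<le> (\<Sum>u\<in>S. outdeg E u / maxdeg V E)"
    and "v_minus E S \<le> (\<Sum>u\<in>S. indeg E u / maxdeg V E)"
    and "(\<Sum>u\<in>S. outdeg E u / maxdeg V E) + (\<Sum>u\<in>S. indeg E u / maxdeg V E)
      = v_plus E S + v_minus E S + v_pm E S"
proof -
  let ?D = "real (maxdeg V E)"
  have D: "0 < ?D"
    using maxdeg_pos[OF assms(1)] by simp
  have "finite S"
    using indep_sets_subset[OF S] finite_subset finite_vertices by blast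
  have deg: "real (outdeg E u) + real (indeg E u) = ?D" if "u \<in> S" for u
    using indep_set_deg[OF S that] unfolding deg_def by simp
  have out_share: "real (outdeg E u) / ?D = 1" if "u \<in> S" "indeg E u = 0" for u
    using deg[OF that(1)] that(2) D by simp
  have in_share: "real (indeg E u) / ?D = 1" if "u \<in> S" "outdeg E u = 0" for u
    using deg[OF that(1)] that(2) D by simp
  show "v_plus E S \<le> (\<Sum>u\<in>S. outdeg E u / ?D)"
    unfolding v_plus_def using \<open>finite S\<close> out_share by (intro card_le_sum) auto
  show "v_minus E S \<le> (\<Sum>u\<in>S. indeg E u / ?D)"
    unfolding v_minus_def using \<open>finite S\<close> in_share by (intro card_le_sum) auto
  have "(\<Sum>u\<in>S. outdeg E u / ?D) + (\<Sum>u\<in>S. indeg E u / ?D) = (\<Sum>u\<in>S. 1)"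
    unfolding sum.distrib[symmetric] add_divide_distrib[symmetric] using D deg by simp
  then show "(\<Sum>u\<in>S. outdeg E u / ?D) + (\<Sum>u\<in>S. indeg E u / ?D)
      = v_plus E S + v_minus E S + v_pm E S"
    using card_indep_set_split[OF assms] by simp
qed

lemma g_H_le_f_H_at_cost:
  assumes "E \<noteq> {}"
    and x: "0 \<le> x1" "0 \<le> x2" and y: "0 \<le> y1" "y1 \<le> 1" "0 \<le> y2" "y2 \<le> 1"
  shows "g_H V E x1 x2 y1 y2 \<le> f_H V E (x1 * y1 + x2 * y2) (x1 * y1 + x2 * y2) 1 1"
  unfolding g_H_def f_H_def
proof (rule sum_mono)
  fix S assume S: "S \<in> indep_sets V E"
  let ?g = "x1 ^ v_plus E S * x2 ^ v_minus E S * min x1 x2 ^ v_pm E S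
    * rpow y1 (a_S E S) * rpow y2 (b_S E S)"
  let ?c = "x1 * y1 + x2 * y2"
  have "?g \<le> ?c ^ (v_plus E S + v_minus E S + v_pm E S)"
    by (rule monomial_le_cost_power[OF x y a_S_ge_outdeg_share[OF assms(1) S]
          b_S_ge_indeg_share[OF assms(1) S] vertex_counts_le_degree_shares[OF assms(1) S]])
  then show "?g \<le> ?c ^ v_plus E S * ?c ^ v_minus E S * min ?c ?c ^ v_pm E S
      * 1 ^ card (out_nbhd E S) * 1 ^ card (in_nbhd E S)"
    by (simp add: power_add)
qed

lemma feasible_costs_f_H_dominated:
  assumes "1 \<le> c" and "b \<in> feasible_costs (f_H V E) c"
  shows "\<exists>a\<in>feasible_costs (g_H V E) c. a \<le> b"
proof -
  obtain x1 x2 y1 y2 where b: "b = ereal (x1 * y1 + x2 * y2)"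
    and x: "0 \<le> x1" "0 \<le> x2" and y: "0 \<le> y1" "y1 \<le> 1" "0 \<le> y2" "y2 \<le> 1"
    and f: "f_H V E x1 x2 y1 y2 = c"
    using assms(2) unfolding feasible_costs_def by blast
  have "g_H V E 0 0 y1 y2 \<le> c"
    using g_H_at_zero[OF finite_vertices] assms(1) by simp
  moreover have "c \<le> g_H V E x1 x2 y1 y2"
    using f_H_le_g_H[OF x y] f by simp
  ultimately show ?thesis
    using feasible_cost_le_by_scaling[where h = "g_H V E", OF x y continuous_on_g_H_scaled] b by simp
qed

lemma feasible_costs_g_H_dominated:
  assumes "1 \<le> c" and "b \<in> feasible_costs (g_H V E) c"
  shows "\<exists>a\<in>feasible_costs (f_H V E) c. a \<le> 2 * b"
proof -
  obtain x1 x2 y1 y2 where b: "b = ereal (x1 * y1 + x2 * y2)"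
    and x: "0 \<le> x1" "0 \<le> x2" and y: "0 \<le> y1" "y1 \<le> 1" "0 \<le> y2" "y2 \<le> 1"
    and g: "g_H V E x1 x2 y1 y2 = c"
    using assms(2) unfolding feasible_costs_def by blast
  let ?c = "x1 * y1 + x2 * y2"
  have c: "0 \<le> ?c"
    using x y by simp
  show ?thesis
  proof (cases "E = {}")
    case True
    \<comment> \<open>Isolated vertices count in both v^+ and v^-, so the monomial bound fails here;
      but without edges f_H = g_H.\<close>
    then have "b \<in> feasible_costs (f_H V E) c"
      using assms(2) by (simp add: f_H_eq_g_H_without_edges)
    moreover have "b \<le> 2 * b"
      using b c by simp
    ultimately show ?thesis ..
  next
    case False
    have "f_H V E 0 0 1 1 \<le> c"
      using f_H_at_zero[OF finite_vertices] assms(1) by simp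
    moreover have "c \<le> f_H V E ?c ?c 1 1"
      using g_H_le_f_H_at_cost[OF False x y] g by simp
    moreover have "continuous_on {0..1} (\<lambda>t. f_H V E (t * ?c) (t * ?c) 1 1)"
      by (rule continuous_on_f_H_scaled)
    ultimately have "\<exists>a\<in>feasible_costs (f_H V E) c. a \<le> ereal (?c * 1 + ?c * 1)"
      by (intro feasible_cost_le_by_scaling c) auto
    then show ?thesis
      using b by auto
  qed
qed

end

theorem proposition5p6:
  fixes V :: "'a set" and E :: "('a \<times> 'a) set" and \<delta> :: real
  assumes "finite V" and "E \<subseteq> V \<times> V" and "\<forall>v. (v, v) \<notin> E" and "\<delta> > 0"
  shows "G_H V E \<delta> \<le> F_H V E \<delta> \<and> F_H V E \<delta> \<le> 2 * G_H V E \<delta>"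
proof -
  interpret loopfree_digraph V E
    using assms(1-3) by unfold_locales auto
  have level: "1 \<le> 1 + \<delta>"
    using assms(4) by simp
  have "G_H V E \<delta> \<le> ereal 1 * F_H V E \<delta>"
    unfolding G_H_eq_Inf_feasible_costs F_H_eq_Inf_feasible_costs
    by (rule Inf_le_scaled_Inf) (use feasible_costs_f_H_dominated[OF level] in auto)
  moreover have "F_H V E \<delta> \<le> ereal 2 * G_H V E \<delta>"
    unfolding G_H_eq_Inf_feasible_costs F_H_eq_Inf_feasible_costs
    by (rule Inf_le_scaled_Inf) (use feasible_costs_g_H_dominated[OF level] in auto)
  ultimately show ?thesis
    by simp
qed

end
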